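(* Let $n=3$ and let $d=(d_1,d_2,d_3)$ satisfy $d_1\ge d_2\ge d_3\ge 0$ and $d_1+d_2+d_3=1$. Then $\min_\chi\|d-\mathcal{SS}(\chi)\|_1\le\tfrac13$, the minimum ranging over all weighted voting games $\chi$ on $N=\{1,2,3\}$, and equality holds if and only if $d$ lies in one of the following sets: (i) $d_1=\tfrac56$, $\tfrac1{12}\le d_2\le\tfrac16$; (ii) $\tfrac23\le d_1\le\tfrac56$, $d_1+d_2=1$ (i.e. $d_3=0$); (iii) $\tfrac12\le d_1\le\tfrac23$, $d_2=\tfrac13$; (iv) $d_1=\tfrac12$, $\tfrac14\le d_2\le\tfrac13$; (v) $\tfrac5{12}\le d_1\le\tfrac12$, $d_1+d_2=\tfrac56$ (i.e. $d_3=\tfrac16$).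
   Context: A simple game on $N=\{1,\dots,n\}$ is a monotone Boolean function $\chi:2^N\to\{0,1\}$ with $\chi(\emptyset)=0$, $\chi(N)=1$; it is a weighted voting game if there are weights $w_i\ge0$ and a quota $q$ with $\chi(U)=1\iff\sum_{i\in U}w_i\ge q$. An $i$-swing is a set $U\subseteq N\setminus\{i\}$ with $\chi(U)=0$, $\chi(U\cup\{i\})=1$. Shapley–Shubik index: $\mathcal{SS}(\chi,i)=\frac1{n!}\sum_{U\text{ an }i\text{-swing}}|U|!(n-|U|-1)!$, and $\mathcal{SS}(\chi)=(\mathcal{SS}(\chi,1),\dots,\mathcal{SS}(\chi,n))$. For $n=3$, up to permutation of voters, the achievable Shapley–Shubik vectors are $(1,0,0)$, $(\tfrac23,\tfrac16,\tfrac16)$, $(\tfrac12,\tfrac12,0)$, $(\tfrac13,\tfrac13,\tfrac13)$. *)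

theory Defs
  imports Complex_Main
begin

text \<open>Voters are N = {1..n}. A game is a predicate on coalitions (subsets of N);
  its values outside subsets of N are irrelevant.\<close>

definition simple_game :: "nat \<Rightarrow> (nat set \<Rightarrow> bool) \<Rightarrow> bool" where
  "simple_game n \<chi> \<longleftrightarrow>
     (\<forall>U V. U \<subseteq> V \<and> V \<subseteq> {1..n} \<and> \<chi> U \<longrightarrow> \<chi> V) \<and>
     \<not> \<chi> {} \<and> \<chi> {1..n}"

definition weighted_voting_game :: "nat \<Rightarrow> (nat set \<Rightarrow> bool) \<Rightarrow> bool" where
  "weighted_voting_game n \<chi> \<longleftrightarrow> simple_game n \<chi> \<and>
     (\<exists>(w :: nat \<Rightarrow> real) (q :: real). (\<forall>i\<in>{1..n}. w i \<ge> 0) \<and>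
        (\<forall>U. U \<subseteq> {1..n} \<longrightarrow> (\<chi> U \<longleftrightarrow> (\<Sum>i\<in>U. w i) \<ge> q)))"

definition is_swing :: "nat \<Rightarrow> (nat set \<Rightarrow> bool) \<Rightarrow> nat \<Rightarrow> nat set \<Rightarrow> bool" where
  "is_swing n \<chi> i U \<longleftrightarrow> U \<subseteq> {1..n} - {i} \<and> \<not> \<chi> U \<and> \<chi> (insert i U)"

definition shapley_shubik :: "nat \<Rightarrow> (nat set \<Rightarrow> bool) \<Rightarrow> nat \<Rightarrow> real" where
  "shapley_shubik n \<chi> i =
     (1 / fact n) * (\<Sum>U \<in> {U. is_swing n \<chi> i U}.
        fact (card U) * fact (n - card U - 1))"

definition l1_dist :: "nat \<Rightarrow> (nat \<Rightarrow> real) \<Rightarrow> (nat \<Rightarrow> real) \<Rightarrow> real" where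
  "l1_dist n x y = (\<Sum>i\<in>{1..n}. \<bar>x i - y i\<bar>)"

definition min_dist_wvg :: "nat \<Rightarrow> (nat \<Rightarrow> real) \<Rightarrow> real" where
  "min_dist_wvg n d =
     Min {l1_dist n d (shapley_shubik n \<chi>) | \<chi>. weighted_voting_game n \<chi>}"

end

theory Submission imports Defs begin

text \<open>Up to permutation a simple game on three voters has one of the Shapley-Shubik vectors
  (1,0,0), (2/3,1/6,1/6), (1/2,1/2,0), (1/3,1/3,1/3), and each is realised by a weighted
  voting game. Since d is sorted decreasingly, the rearrangement inequality for the
  L1 distance shows that the permuted vectors are never closer to d than the sorted ones,
  so the minimal distance is the least of four explicit piecewise-linear functions of d.
  Both claims are then linear arithmetic on the simplex.\<close>

lemma shapley_shubik_eq_sum_Pow: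
  "shapley_shubik n \<chi> i = (1 / fact n) *
     (\<Sum>U\<in>Pow ({1..n} - {i}). if \<not> \<chi> U \<and> \<chi> (insert i U)
        then fact (card U) * fact (n - card U - 1) else 0)"
proof -
  have swings: "{U. is_swing n \<chi> i U} = {U \<in> Pow ({1..n} - {i}). \<not> \<chi> U \<and> \<chi> (insert i U)}"
    unfolding is_swing_def by auto
  have fin: "finite (Pow ({1..n} - {i}))" by simp
  show ?thesis
    unfolding shapley_shubik_def swings sum.inter_filter[OF fin] ..
qed

lemma voters_3: "{1..3::nat} = {1,2,3}"
  by auto

lemma shapley_shubik_3_voter1:
  "shapley_shubik 3 \<chi> 1 = (1/6) *
     ((if \<not> \<chi> {} \<and> \<chi> {1} then 2 else 0) + (if \<not> \<chi> {2} \<and> \<chi> {1,2} then 1 else 0)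
    + (if \<not> \<chi> {3} \<and> \<chi> {1,3} then 1 else 0) + (if \<not> \<chi> {2,3} \<and> \<chi> {1,2,3} then 2 else 0))"
proof -
  have voters: "{1..3::nat} - {1} = {2,3}" by auto
  show ?thesis
    unfolding shapley_shubik_eq_sum_Pow voters by (simp add: Pow_insert fact_numeral)
qed

lemma shapley_shubik_3_voter2:
  "shapley_shubik 3 \<chi> 2 = (1/6) *
     ((if \<not> \<chi> {} \<and> \<chi> {2} then 2 else 0) + (if \<not> \<chi> {1} \<and> \<chi> {1,2} then 1 else 0)
    + (if \<not> \<chi> {3} \<and> \<chi> {2,3} then 1 else 0) + (if \<not> \<chi> {1,3} \<and> \<chi> {1,2,3} then 2 else 0))"
proof -
  have voters: "{1..3::nat} - {2} = {1,3}" by auto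
  have "{2, Suc 0} = {Suc 0, 2}" "{2, Suc 0, 3} = {Suc 0, 2, 3}" by auto
  then show ?thesis
    unfolding shapley_shubik_eq_sum_Pow voters by (simp add: Pow_insert fact_numeral)
qed

lemma shapley_shubik_3_voter3:
  "shapley_shubik 3 \<chi> 3 = (1/6) *
     ((if \<not> \<chi> {} \<and> \<chi> {3} then 2 else 0) + (if \<not> \<chi> {1} \<and> \<chi> {1,3} then 1 else 0)
    + (if \<not> \<chi> {2} \<and> \<chi> {2,3} then 1 else 0) + (if \<not> \<chi> {1,2} \<and> \<chi> {1,2,3} then 2 else 0))"
proof -
  have voters: "{1..3::nat} - {3} = {1,2}" by auto
  have "{3, Suc 0} = {Suc 0, 3}" "{3, 2::nat} = {2, 3}" "{3, Suc 0, 2} = {Suc 0, 2, 3}" by auto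
  then show ?thesis
    unfolding shapley_shubik_eq_sum_Pow voters by (simp add: Pow_insert fact_numeral)
qed

lemmas shapley_shubik_3_voters =
  shapley_shubik_3_voter1 shapley_shubik_3_voter2 shapley_shubik_3_voter3

definition quota_game :: "(nat \<Rightarrow> real) \<Rightarrow> real \<Rightarrow> nat set \<Rightarrow> bool" where
  "quota_game w q U \<longleftrightarrow> q \<le> (\<Sum>i\<in>U. w i)"

lemma weighted_voting_game_quota_game:
  assumes nonneg: "\<forall>i\<in>{1..n}. w i \<ge> 0" and "0 < q" "q \<le> (\<Sum>i\<in>{1..n}. w i)"
  shows "weighted_voting_game n (quota_game w q)"
proof -
  have "sum w U \<le> sum w V" if "U \<subseteq> V" "V \<subseteq> {1..n}" for U V
    using that nonneg by (intro sum_mono2) (auto intro: finite_subset)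
  then have "simple_game n (quota_game w q)"
    unfolding simple_game_def quota_game_def using assms(2,3) by (auto intro: order_trans)
  then show ?thesis
    unfolding weighted_voting_game_def quota_game_def using nonneg by blast
qed

definition shapley_shubik_3 :: "(nat set \<Rightarrow> bool) \<Rightarrow> real \<times> real \<times> real" where
  "shapley_shubik_3 \<chi> = (shapley_shubik 3 \<chi> 1, shapley_shubik 3 \<chi> 2, shapley_shubik 3 \<chi> 3)"

definition shapley_shubik_vectors_3 :: "(real \<times> real \<times> real) set" where
  "shapley_shubik_vectors_3 =
     {(1,0,0), (0,1,0), (0,0,1), (2/3,1/6,1/6), (1/6,2/3,1/6), (1/6,1/6,2/3),
      (1/2,1/2,0), (1/2,0,1/2), (0,1/2,1/2), (1/3,1/3,1/3)}"

lemma simple_game_shapley_shubik_3: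
  assumes "simple_game 3 \<chi>"
  shows "shapley_shubik_3 \<chi> \<in> shapley_shubik_vectors_3"
proof -
  have mono: "\<And>U V. U \<subseteq> V \<Longrightarrow> V \<subseteq> {1,2,3} \<Longrightarrow> \<chi> U \<Longrightarrow> \<chi> V"
    using assms unfolding simple_game_def voters_3 by blast
  have "\<not> \<chi> {}" "\<chi> {1,2,3}"
    using assms unfolding simple_game_def voters_3 by blast+
  moreover have "\<chi> {1} \<Longrightarrow> \<chi> {1,2}" "\<chi> {1} \<Longrightarrow> \<chi> {1,3}" "\<chi> {2} \<Longrightarrow> \<chi> {1,2}"
    "\<chi> {2} \<Longrightarrow> \<chi> {2,3}" "\<chi> {3} \<Longrightarrow> \<chi> {1,3}" "\<chi> {3} \<Longrightarrow> \<chi> {2,3}"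
    by (erule mono[rotated 2]; auto)+
  ultimately show ?thesis
    unfolding shapley_shubik_3_def shapley_shubik_3_voters shapley_shubik_vectors_3_def
    by (cases "\<chi> {1}"; cases "\<chi> {2}"; cases "\<chi> {3}";
        cases "\<chi> {1,2}"; cases "\<chi> {1,3}"; cases "\<chi> {2,3}"; simp)
qed

definition sorted_shapley_shubik_vectors_3 :: "(real \<times> real \<times> real) set" where
  "sorted_shapley_shubik_vectors_3 = {(1,0,0), (2/3,1/6,1/6), (1/2,1/2,0), (1/3,1/3,1/3)}"

lemma sorted_shapley_shubik_vectors_3_achieved:
  "sorted_shapley_shubik_vectors_3 \<subseteq> shapley_shubik_3 ` {\<chi>. weighted_voting_game 3 \<chi>}"
proof -
  let ?achieved = "shapley_shubik_3 ` {\<chi>. weighted_voting_game 3 \<chi>}"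
  let ?dictator = "quota_game (\<lambda>i. if i = 1 then 1 else 0) 1"
  let ?veto = "quota_game (\<lambda>i. if i = 1 then 2 else 1) 3"
  let ?dummy_voter = "quota_game (\<lambda>i. if i = 3 then 0 else 1) 2"
  let ?unanimity = "quota_game (\<lambda>i. 1) 3"
  have "(1, 0, 0) \<in> ?achieved"
    by (rule image_eqI[where x = ?dictator], unfold shapley_shubik_3_def shapley_shubik_3_voters)
       (auto simp: voters_3[simplified] quota_game_def intro!: weighted_voting_game_quota_game)
  moreover have "(2/3, 1/6, 1/6) \<in> ?achieved"
    by (rule image_eqI[where x = ?veto], unfold shapley_shubik_3_def shapley_shubik_3_voters)
       (auto simp: voters_3[simplified] quota_game_def intro!: weighted_voting_game_quota_game)
  moreover have "(1/2, 1/2, 0) \<in> ?achieved"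
    by (rule image_eqI[where x = ?dummy_voter], unfold shapley_shubik_3_def shapley_shubik_3_voters)
       (auto simp: voters_3[simplified] quota_game_def intro!: weighted_voting_game_quota_game)
  moreover have "(1/3, 1/3, 1/3) \<in> ?achieved"
    by (rule image_eqI[where x = ?unanimity], unfold shapley_shubik_3_def shapley_shubik_3_voters)
       (auto simp: voters_3[simplified] quota_game_def intro!: weighted_voting_game_quota_game)
  ultimately show ?thesis
    unfolding sorted_shapley_shubik_vectors_3_def by blast
qed

definition l1_dist_3 :: "(nat \<Rightarrow> real) \<Rightarrow> real \<times> real \<times> real \<Rightarrow> real" where
  "l1_dist_3 d s = (case s of (x, y, z) \<Rightarrow> \<bar>d 1 - x\<bar> + \<bar>d 2 - y\<bar> + \<bar>d 3 - z\<bar>)"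

lemma l1_dist_shapley_shubik_3:
  "l1_dist 3 d (shapley_shubik 3 \<chi>) = l1_dist_3 d (shapley_shubik_3 \<chi>)"
  unfolding l1_dist_def l1_dist_3_def shapley_shubik_3_def voters_3 by simp

lemma abs_diff_sorted_le_swapped:
  fixes a b x y :: real
  assumes "b \<le> a" "y \<le> x"
  shows "\<bar>a - x\<bar> + \<bar>b - y\<bar> \<le> \<bar>a - y\<bar> + \<bar>b - x\<bar>"
  using assms by (simp add: abs_if)

lemma l1_dist_3_sorted_vector_le:
  assumes "d 2 \<le> d 1" "d 3 \<le> d 2" "s \<in> shapley_shubik_vectors_3"
  shows "\<exists>t\<in>sorted_shapley_shubik_vectors_3. l1_dist_3 d t \<le> l1_dist_3 d s"
proof -
  have "d 3 \<le> d 1" using assms by linarith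
  note swap12 = abs_diff_sorted_le_swapped[OF assms(1)]
    and swap13 = abs_diff_sorted_le_swapped[OF this]
    and swap23 = abs_diff_sorted_le_swapped[OF assms(2)]
  have dist: "l1_dist_3 d (x, y, z) = \<bar>d 1 - x\<bar> + \<bar>d 2 - y\<bar> + \<bar>d 3 - z\<bar>" for x y z
    unfolding l1_dist_3_def by simp
  let ?sorted = sorted_shapley_shubik_vectors_3
  have in_sorted: "(1,0,0) \<in> ?sorted" "(2/3,1/6,1/6) \<in> ?sorted" "(1/2,1/2,0) \<in> ?sorted"
    unfolding sorted_shapley_shubik_vectors_3_def by simp_all
  consider "s \<in> ?sorted" | "s = (0,1,0)" | "s = (0,0,1)" | "s = (1/6,2/3,1/6)"
    | "s = (1/6,1/6,2/3)" | "s = (1/2,0,1/2)" | "s = (0,1/2,1/2)"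
    using assms(3) unfolding shapley_shubik_vectors_3_def sorted_shapley_shubik_vectors_3_def
    by blast
  then show ?thesis
  proof cases
    case 1
    then show ?thesis by blast
  next
    case 2
    with swap12[where x=1 and y=0] show ?thesis
      by (auto simp: dist intro!: bexI[OF _ in_sorted(1)])
  next
    case 3
    with swap13[where x=1 and y=0] show ?thesis
      by (auto simp: dist intro!: bexI[OF _ in_sorted(1)])
  next
    case 4
    with swap12[where x="2/3" and y="1/6"] show ?thesis
      by (auto simp: dist intro!: bexI[OF _ in_sorted(2)])
  next
    case 5
    with swap13[where x="2/3" and y="1/6"] show ?thesis
      by (auto simp: dist intro!: bexI[OF _ in_sorted(2)])
  next
    case 6
    with swap23[where x="1/2" and y=0] show ?thesis
      by (auto simp: dist intro!: bexI[OF _ in_sorted(3)])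
  next
    case 7
    with swap13[where x="1/2" and y=0] show ?thesis
      by (auto simp: dist intro!: bexI[OF _ in_sorted(3)])
  qed
qed

lemma min_dist_wvg_3_eq_Min_sorted:
  assumes "d 2 \<le> d 1" "d 3 \<le> d 2"
  shows "min_dist_wvg 3 d = Min (l1_dist_3 d ` sorted_shapley_shubik_vectors_3)"
proof -
  let ?sorted = sorted_shapley_shubik_vectors_3
  let ?achieved = "shapley_shubik_3 ` {\<chi>. weighted_voting_game 3 \<chi>}"
  have dists: "{l1_dist 3 d (shapley_shubik 3 \<chi>) | \<chi>. weighted_voting_game 3 \<chi>}
      = l1_dist_3 d ` ?achieved"
    unfolding l1_dist_shapley_shubik_3 by blast
  have achieved_sub: "?achieved \<subseteq> shapley_shubik_vectors_3"
    using simple_game_shapley_shubik_3 unfolding weighted_voting_game_def by blast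
  note sorted_sub = sorted_shapley_shubik_vectors_3_achieved
  have fin: "finite (l1_dist_3 d ` ?achieved)"
    using achieved_sub unfolding shapley_shubik_vectors_3_def by (auto intro: finite_subset)
  have sorted_ne: "l1_dist_3 d ` ?sorted \<noteq> {}"
    unfolding sorted_shapley_shubik_vectors_3_def by simp
  have "Min (l1_dist_3 d ` ?sorted) \<le> Min (l1_dist_3 d ` ?achieved)"
  proof -
    obtain s where s: "s \<in> ?achieved" "Min (l1_dist_3 d ` ?achieved) = l1_dist_3 d s"
      using Min_in[OF fin] sorted_sub sorted_ne by blast
    then obtain t where "t \<in> ?sorted" "l1_dist_3 d t \<le> l1_dist_3 d s"
      using l1_dist_3_sorted_vector_le[OF assms] achieved_sub by blast
    moreover have "finite (l1_dist_3 d ` ?sorted)"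
      unfolding sorted_shapley_shubik_vectors_3_def by simp
    ultimately show ?thesis
      using s(2) by (metis Min_le image_eqI order_trans)
  qed
  moreover have "Min (l1_dist_3 d ` ?achieved) \<le> Min (l1_dist_3 d ` ?sorted)"
    using Min_antimono[OF image_mono[OF sorted_sub] sorted_ne fin] .
  ultimately show ?thesis
    unfolding min_dist_wvg_def dists by linarith
qed

definition max_distance_region :: "(nat \<Rightarrow> real) \<Rightarrow> bool" where
  "max_distance_region d \<longleftrightarrow>
      (d 1 = 5/6 \<and> 1/12 \<le> d 2 \<and> d 2 \<le> 1/6) \<or>
      (2/3 \<le> d 1 \<and> d 1 \<le> 5/6 \<and> d 1 + d 2 = 1) \<or>
      (1/2 \<le> d 1 \<and> d 1 \<le> 2/3 \<and> d 2 = 1/3) \<or>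
      (d 1 = 1/2 \<and> 1/4 \<le> d 2 \<and> d 2 \<le> 1/3) \<or>
      (5/12 \<le> d 1 \<and> d 1 \<le> 1/2 \<and> d 1 + d 2 = 5/6)"

lemma ex_sorted_vector_l1_dist_3_le_one_third:
  assumes "d 2 \<le> d 1" "d 3 \<le> d 2" "0 \<le> d 3" "d 1 + d 2 + d 3 = 1"
  shows "\<exists>t\<in>sorted_shapley_shubik_vectors_3. l1_dist_3 d t \<le> 1/3"
  using assms unfolding sorted_shapley_shubik_vectors_3_def l1_dist_3_def
  by (cases "d 1 \<le> 2/3"; cases "d 1 \<le> 1/2"; cases "d 2 \<le> 1/6"; cases "d 2 \<le> 1/3";
      cases "d 3 \<le> 1/6"; simp add: abs_of_nonneg abs_of_nonpos; linarith)

lemma ex_sorted_vector_l1_dist_3_less_one_third: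
  assumes "d 2 \<le> d 1" "d 3 \<le> d 2" "0 \<le> d 3" "d 1 + d 2 + d 3 = 1"
    and "\<not> max_distance_region d"
  shows "\<exists>t\<in>sorted_shapley_shubik_vectors_3. l1_dist_3 d t < 1/3"
  using assms unfolding sorted_shapley_shubik_vectors_3_def l1_dist_3_def max_distance_region_def
  by (cases "d 1 \<le> 2/3"; cases "d 1 \<le> 1/2"; cases "d 2 \<le> 1/6"; cases "d 2 \<le> 1/3";
      cases "d 3 \<le> 1/6"; simp add: abs_of_nonneg abs_of_nonpos; linarith)

lemma max_distance_region_l1_dist_3_ge_one_third:
  assumes "d 1 + d 2 + d 3 = 1" "max_distance_region d" "(x, y, z) \<in> sorted_shapley_shubik_vectors_3"
  shows "1/3 \<le> l1_dist_3 d (x, y, z)"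
proof -
  have "d 1 - x \<le> \<bar>d 1 - x\<bar>" "x - d 1 \<le> \<bar>d 1 - x\<bar>" "d 2 - y \<le> \<bar>d 2 - y\<bar>"
    "y - d 2 \<le> \<bar>d 2 - y\<bar>" "d 3 - z \<le> \<bar>d 3 - z\<bar>" "z - d 3 \<le> \<bar>d 3 - z\<bar>"
    by linarith+
  moreover from assms(3) have "(x = 1 \<and> y = 0 \<and> z = 0) \<or> (x = 2/3 \<and> y = 1/6 \<and> z = 1/6) \<or>
      (x = 1/2 \<and> y = 1/2 \<and> z = 0) \<or> (x = 1/3 \<and> y = 1/3 \<and> z = 1/3)"
    unfolding sorted_shapley_shubik_vectors_3_def by auto
  ultimately show ?thesis
    using assms(1,2) unfolding max_distance_region_def l1_dist_3_def
    by (simp only: prod.case) (elim disjE conjE; linarith)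
qed

theorem mainTheorem3:
  fixes d :: "nat \<Rightarrow> real"
  assumes "d 1 \<ge> d 2" "d 2 \<ge> d 3" "d 3 \<ge> 0" "d 1 + d 2 + d 3 = 1"
  shows "min_dist_wvg 3 d \<le> 1/3 \<and>
    (min_dist_wvg 3 d = 1/3 \<longleftrightarrow>
      (d 1 = 5/6 \<and> 1/12 \<le> d 2 \<and> d 2 \<le> 1/6) \<or>
      (2/3 \<le> d 1 \<and> d 1 \<le> 5/6 \<and> d 1 + d 2 = 1) \<or>
      (1/2 \<le> d 1 \<and> d 1 \<le> 2/3 \<and> d 2 = 1/3) \<or>
      (d 1 = 1/2 \<and> 1/4 \<le> d 2 \<and> d 2 \<le> 1/3) \<or>
      (5/12 \<le> d 1 \<and> d 1 \<le> 1/2 \<and> d 1 + d 2 = 5/6))"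
proof -
  let ?dists = "l1_dist_3 d ` sorted_shapley_shubik_vectors_3"
  have fin: "finite ?dists" and ne: "?dists \<noteq> {}"
    unfolding sorted_shapley_shubik_vectors_3_def by simp_all
  have min_dist: "min_dist_wvg 3 d = Min ?dists"
    using min_dist_wvg_3_eq_Min_sorted assms(1,2) .
  have le: "Min ?dists \<le> 1/3"
    using ex_sorted_vector_l1_dist_3_le_one_third[OF assms] Min_le[OF fin] by fastforce
  have "Min ?dists < 1/3" if "\<not> max_distance_region d"
    using ex_sorted_vector_l1_dist_3_less_one_third[OF assms that] Min_le[OF fin] by fastforce
  moreover have "1/3 \<le> Min ?dists" if "max_distance_region d"
    using max_distance_region_l1_dist_3_ge_one_third[OF assms(4) that] Min_in[OF fin ne] by auto
  ultimately show ?thesis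
    unfolding min_dist max_distance_region_def[symmetric] using le by force
qed

end
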